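(* Consider $n$ agents with an undirected graph $\mathcal{G}$ on $\{1,\dots,n\}$ and neighbor sets $\mathcal{N}_i$, executing a distributed algorithm of the form $$\theta(k+1)=f(\theta(k),x(k)),\qquad x(k)=g(\theta(k),\eta(k)),\qquad k\in\mathbb{Z}_{\ge0},\qquad \theta(0)=\theta_0,$$ where $f,g:\mathbb{R}^n\times\mathbb{R}^n\to\mathbb{R}^n$ are continuous, the $i$th component of $f$ depends only on $\theta_i$ and $\{x_j\}_{j\in\mathcal{N}_i\cup\{i\}}$, the $i$th component of $g$ depends only on $\theta_i$ and $\eta_i$, and $\boldsymbol{\eta}=\{\eta(k)\}_{k\ge0}$ is a random noise sequence in $\mathbb{R}^n$ with an arbitrary distribution. Then, for any $\delta>0$ and any $\epsilon>0$, it is impossible that both (i) for every initial state $\theta_0\in\mathbb{R}^n$ and every $i\in\{1,\dots,n\}$, $\theta_i(k)$ converges in distribution to $\mathrm{Ave}(\theta_0)=\frac1n\mathbf{1}_n^T\theta_0$ as $k\to\infty$, and (ii) the algorithm is $\epsilon$-differentially private (with adjacency bound $\delta$).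
   Context: For a fixed initial state $\theta_0$, the message sequence $\mathbf{x}=\{x(k)\}_{k\ge0}$ is a deterministic function of the noise sequence; denote this map $X_{\theta_0}:(\mathbb{R}^n)^{\mathbb{N}}\to(\mathbb{R}^n)^{\mathbb{N}}$, $X_{\theta_0}(\boldsymbol{\eta})=\mathbf{x}$. Two initial states $\theta_0^{(1)},\theta_0^{(2)}\in\mathbb{R}^n$ are $\delta$-adjacent if there is $i_0$ with $|\theta^{(2)}_{0,i_0}-\theta^{(1)}_{0,i_0}|\le\delta$ and $\theta^{(2)}_{0,i}=\theta^{(1)}_{0,i}$ for all $i\ne i_0$. The algorithm is $\epsilon$-differentially private if for every pair of $\delta$-adjacent initial states and every Borel set $\mathcal{O}$ of $(\mathbb{R}^n)^{\mathbb{N}}$ (product topology), $\mathbb{P}\{\boldsymbol\eta: X_{\theta_0^{(1)}}(\boldsymbol\eta)\in\mathcal{O}\}\le e^{\epsilon}\,\mathbb{P}\{\boldsymbol\eta: X_{\theta_0^{(2)}}(\boldsymbol\eta)\in\mathcal{O}\}$. *)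

theory Defs
  imports "HOL-Probability.Probability"
begin

fun traj :: "(real^'n \<Rightarrow> real^'n \<Rightarrow> real^'n) \<Rightarrow> (real^'n \<Rightarrow> real^'n \<Rightarrow> real^'n)
    \<Rightarrow> real^'n \<Rightarrow> (nat \<Rightarrow> real^'n) \<Rightarrow> nat \<Rightarrow> real^'n" where
  "traj f g \<theta>0 \<eta> 0 = \<theta>0"
| "traj f g \<theta>0 \<eta> (Suc k) = f (traj f g \<theta>0 \<eta> k) (g (traj f g \<theta>0 \<eta> k) (\<eta> k))"

definition msgs :: "(real^'n \<Rightarrow> real^'n \<Rightarrow> real^'n) \<Rightarrow> (real^'n \<Rightarrow> real^'n \<Rightarrow> real^'n)
    \<Rightarrow> real^'n \<Rightarrow> (nat \<Rightarrow> real^'n) \<Rightarrow> (nat \<Rightarrow> real^'n)" where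
  "msgs f g \<theta>0 \<eta> = (\<lambda>k. g (traj f g \<theta>0 \<eta> k) (\<eta> k))"

definition Ave :: "real^'n \<Rightarrow> real" where
  "Ave \<theta> = (\<Sum>i\<in>UNIV. \<theta> $ i) / real CARD('n)"

definition delta_adjacent :: "real \<Rightarrow> real^'n \<Rightarrow> real^'n \<Rightarrow> bool" where
  "delta_adjacent \<delta> \<theta>1 \<theta>2 \<longleftrightarrow>
     (\<exists>i0. \<bar>\<theta>2 $ i0 - \<theta>1 $ i0\<bar> \<le> \<delta> \<and> (\<forall>i. i \<noteq> i0 \<longrightarrow> \<theta>2 $ i = \<theta>1 $ i))"

definition diff_private ::
  "'w measure \<Rightarrow> ('w \<Rightarrow> nat \<Rightarrow> real^'n)
   \<Rightarrow> (real^'n \<Rightarrow> real^'n \<Rightarrow> real^'n) \<Rightarrow> (real^'n \<Rightarrow> real^'n \<Rightarrow> real^'n)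
   \<Rightarrow> real \<Rightarrow> real \<Rightarrow> bool" where
  "diff_private M \<eta> f g \<epsilon> \<delta> \<longleftrightarrow>
     (\<forall>\<theta>1 \<theta>2. delta_adjacent \<delta> \<theta>1 \<theta>2 \<longrightarrow>
       (\<forall>S \<in> sets (borel :: (nat \<Rightarrow> real^'n) measure).
          measure M {\<omega> \<in> space M. msgs f g \<theta>1 (\<eta> \<omega>) \<in> S}
            \<le> exp \<epsilon> * measure M {\<omega> \<in> space M. msgs f g \<theta>2 (\<eta> \<omega>) \<in> S}))"

end

theory Submission
  imports Defs
begin

text \<open>Agent j only sees its own state and the messages of its neighbours, so its state is a
  continuous function of the message sequence and of its own initial value. If the initial
  states differ only at an agent i0 \<noteq> j, differential privacy therefore transfers to the
  law of the state of agent j at time k: for every Borel U,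
  P1(theta_j(k) \<in> U) \<le> exp \<epsilon> * P2(theta_j(k) \<in> U), uniformly in k.
  Perturbing the i0-th initial value by \<delta> moves the average by \<delta>/n, so by average consensus
  the two laws of theta_j(k) concentrate at different points, and taking U to be a half-line
  separating them makes the left side tend to 1 and the right side to 0.\<close>

primrec replay :: "(real^'n \<Rightarrow> real^'n \<Rightarrow> real^'n) \<Rightarrow> real^'n \<Rightarrow> (nat \<Rightarrow> real^'n) \<Rightarrow> nat \<Rightarrow> real^'n"
  where
    "replay f \<theta>0 x 0 = \<theta>0"
  | "replay f \<theta>0 x (Suc k) = f (replay f \<theta>0 x k) (x k)"

lemma continuous_on_replay:
  assumes f_cont: "continuous_on UNIV (\<lambda>(\<theta>, x). f \<theta> x)"
  shows "continuous_on UNIV (\<lambda>x. replay f \<theta>0 x k)"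
proof (induction k)
  case 0
  then show ?case by simp
next
  case (Suc k)
  show ?case
    by simp (rule continuous_on_compose_Pair[OF f_cont[folded UNIV_Times_UNIV] Suc
          continuous_on_product_coordinates]; simp)
qed

lemma continuous_on_traj:
  assumes f_cont: "continuous_on UNIV (\<lambda>(\<theta>, x). f \<theta> x)"
    and g_cont: "continuous_on UNIV (\<lambda>(\<theta>, e). g \<theta> e)"
  shows "continuous_on UNIV (\<lambda>e. traj f g \<theta>0 e k)"
proof (induction k)
  case 0
  then show ?case by simp
next
  case (Suc k)
  have "continuous_on UNIV (\<lambda>e. g (traj f g \<theta>0 e k) (e k))"
    by (rule continuous_on_compose_Pair[OF g_cont[folded UNIV_Times_UNIV] Suc
          continuous_on_product_coordinates]) auto
  then show ?case
    by simp (rule continuous_on_compose_Pair[OF f_cont[folded UNIV_Times_UNIV] Suc], auto)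
qed

lemma borel_measurable_traj_component:
  assumes f_cont: "continuous_on UNIV (\<lambda>(\<theta>, x). f \<theta> x)"
    and g_cont: "continuous_on UNIV (\<lambda>(\<theta>, e). g \<theta> e)"
    and \<eta>: "\<eta> \<in> borel_measurable M"
  shows "(\<lambda>\<omega>. traj f g \<theta>0 (\<eta> \<omega>) k $ j) \<in> borel_measurable M"
proof -
  have "(\<lambda>e. traj f g \<theta>0 e k $ j) \<in> borel_measurable borel"
    by (intro borel_measurable_continuous_onI continuous_on_component
        continuous_on_traj[OF f_cont g_cont])
  then show ?thesis
    using \<eta> by (rule measurable_compose[rotated])
qed

lemma traj_component_eq_replay:
  assumes f_local: "\<And>i \<theta> \<theta>' x x'. \<theta> $ i = \<theta>' $ i \<Longrightarrow>
                    (\<forall>j \<in> {j. E i j} \<union> {i}. x $ j = x' $ j) \<Longrightarrow> f \<theta> x $ i = f \<theta>' x' $ i"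
    and "\<theta>0 $ j = \<theta>0' $ j"
  shows "traj f g \<theta>0 e k $ j = replay f \<theta>0' (msgs f g \<theta>0 e) k $ j"
proof (induction k)
  case 0
  then show ?case using assms(2) by simp
next
  case (Suc k)
  show ?case
    by (simp add: msgs_def) (rule f_local; use Suc in \<open>simp add: msgs_def\<close>)
qed

lemma diff_private_component_bound:
  fixes \<eta> :: "'w \<Rightarrow> nat \<Rightarrow> real^'n"
  assumes f_cont: "continuous_on UNIV (\<lambda>(\<theta>, x). f \<theta> x)"
    and g_cont: "continuous_on UNIV (\<lambda>(\<theta>, e). g \<theta> e)"
    and f_local: "\<And>i \<theta> \<theta>' x x'. \<theta> $ i = \<theta>' $ i \<Longrightarrow>
                    (\<forall>j \<in> {j. E i j} \<union> {i}. x $ j = x' $ j) \<Longrightarrow> f \<theta> x $ i = f \<theta>' x' $ i"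
    and \<eta>: "\<eta> \<in> borel_measurable M"
    and dp: "diff_private M \<eta> f g \<epsilon> \<delta>"
    and adj: "delta_adjacent \<delta> \<theta>1 \<theta>2"
    and agree: "\<theta>2 $ j = \<theta>1 $ j"
    and U: "U \<in> sets borel"
  shows "measure (distr M borel (\<lambda>\<omega>. traj f g \<theta>1 (\<eta> \<omega>) k $ j)) U
           \<le> exp \<epsilon> * measure (distr M borel (\<lambda>\<omega>. traj f g \<theta>2 (\<eta> \<omega>) k $ j)) U"
proof -
  define S where "S = (\<lambda>x. replay f \<theta>1 x k $ j) -` U"
  have replay_meas: "(\<lambda>x. replay f \<theta>1 x k $ j) \<in> borel_measurable borel"
    by (intro borel_measurable_continuous_onI continuous_on_component
        continuous_on_replay[OF f_cont])
  have S: "S \<in> sets borel"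
    unfolding S_def using measurable_sets[OF replay_meas U] by simp
  have event: "(\<lambda>\<omega>. traj f g \<theta> (\<eta> \<omega>) k $ j) -` U \<inter> space M
      = {\<omega> \<in> space M. msgs f g \<theta> (\<eta> \<omega>) \<in> S}"
    if "\<theta> $ j = \<theta>1 $ j" for \<theta>
    unfolding S_def using traj_component_eq_replay[OF f_local that] by auto
  show ?thesis
    unfolding measure_distr[OF borel_measurable_traj_component[OF f_cont g_cont \<eta>] U]
      event[OF refl] event[OF agree]
    using dp adj S unfolding diff_private_def by blast
qed

lemma weak_conv_m_return_cdf:
  assumes "weak_conv_m \<mu> (return borel (c::real))" and "x \<noteq> c"
  shows "(\<lambda>k. cdf (\<mu> k) x) \<longlonglongrightarrow> of_bool (c \<le> x)"
proof -
  interpret point_mass: real_distribution "return borel c"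
    by (simp add: real_distribution_def real_distribution_axioms_def prob_space_return)
  have "isCont (cdf (return borel c)) x"
    using point_mass.isCont_cdf \<open>x \<noteq> c\<close> by (simp add: measure_return)
  then have "(\<lambda>k. cdf (\<mu> k) x) \<longlonglongrightarrow> cdf (return borel c) x"
    using assms(1) unfolding weak_conv_m_def weak_conv_def by blast
  then show ?thesis
    by (simp add: cdf_def measure_return indicator_def)
qed

lemma weak_conv_m_return_not_dominated:
  fixes \<mu> \<nu> :: "nat \<Rightarrow> real measure"
  assumes \<mu>_lim: "weak_conv_m \<mu> (return borel a)" and \<nu>_lim: "weak_conv_m \<nu> (return borel b)"
    and \<mu>: "\<And>k. real_distribution (\<mu> k)" and \<nu>: "\<And>k. real_distribution (\<nu> k)"
    and "a < b"
    and dominated: "\<And>k. measure (\<mu> k) {..<(a + b) / 2} \<le> C * measure (\<nu> k) {..<(a + b) / 2}"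
  shows False
proof -
  define m where "m = (a + b) / 2"
  have "a < m" "m < b"
    using \<open>a < b\<close> by (simp_all add: m_def)
  have \<mu>_bounds: "cdf (\<mu> k) ((a + m) / 2) \<le> measure (\<mu> k) {..<m}" "measure (\<mu> k) {..<m} \<le> 1"
    for k
  proof -
    interpret real_distribution "\<mu> k" by (rule \<mu>)
    show "cdf (\<mu> k) ((a + m) / 2) \<le> measure (\<mu> k) {..<m}"
      unfolding cdf_def using \<open>a < m\<close> by (intro finite_measure_mono) auto
    show "measure (\<mu> k) {..<m} \<le> 1"
      by (rule prob_le_1)
  qed
  have "(\<lambda>k. cdf (\<mu> k) ((a + m) / 2)) \<longlonglongrightarrow> 1"
    using weak_conv_m_return_cdf[OF \<mu>_lim, of "(a + m) / 2"] \<open>a < m\<close> by simp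
  then have \<mu>_to_1: "(\<lambda>k. measure (\<mu> k) {..<m}) \<longlonglongrightarrow> 1"
    by (rule tendsto_sandwich[OF _ _ _ tendsto_const, rotated 2]) (use \<mu>_bounds in auto)
  have \<nu>_upper: "measure (\<nu> k) {..<m} \<le> cdf (\<nu> k) m" for k
  proof -
    interpret real_distribution "\<nu> k" by (rule \<nu>)
    show ?thesis
      unfolding cdf_def by (intro finite_measure_mono) auto
  qed
  have "(\<lambda>k. cdf (\<nu> k) m) \<longlonglongrightarrow> 0"
    using weak_conv_m_return_cdf[OF \<nu>_lim, of m] \<open>m < b\<close> by simp
  then have "(\<lambda>k. measure (\<nu> k) {..<m}) \<longlonglongrightarrow> 0"
    by (rule tendsto_sandwich[OF _ _ tendsto_const, rotated 2]) (use \<nu>_upper in auto)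
  then have "(\<lambda>k. C * measure (\<nu> k) {..<m}) \<longlonglongrightarrow> 0"
    by (rule tendsto_mult_right_zero)
  with \<mu>_to_1 have "1 \<le> (0::real)"
    by (rule LIMSEQ_le) (use dominated[folded m_def] in blast)
  then show False by simp
qed

theorem mainTheorem1:
  fixes E :: "'n::finite \<Rightarrow> 'n \<Rightarrow> bool"
    and f g :: "real^'n \<Rightarrow> real^'n \<Rightarrow> real^'n"
    and M :: "'w measure"
    and \<eta> :: "'w \<Rightarrow> nat \<Rightarrow> real^'n"
    and \<delta> \<epsilon> :: real
  assumes n2: "CARD('n) \<ge> 2"
    and sym: "\<And>i j. E i j \<longleftrightarrow> E j i"
    and f_cont: "continuous_on UNIV (\<lambda>(\<theta>, x). f \<theta> x)"
    and g_cont: "continuous_on UNIV (\<lambda>(\<theta>, e). g \<theta> e)"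
    and f_local: "\<And>i \<theta> \<theta>' x x'. \<theta> $ i = \<theta>' $ i \<Longrightarrow>
                    (\<forall>j \<in> {j. E i j} \<union> {i}. x $ j = x' $ j) \<Longrightarrow> f \<theta> x $ i = f \<theta>' x' $ i"
    and g_local: "\<And>i \<theta> \<theta>' e e'. \<theta> $ i = \<theta>' $ i \<Longrightarrow> e $ i = e' $ i \<Longrightarrow>
                    g \<theta> e $ i = g \<theta>' e' $ i"
    and P: "prob_space M"
    and eta_rv: "\<eta> \<in> borel_measurable M"
    and \<delta>pos: "\<delta> > 0"
    and \<epsilon>pos: "\<epsilon> > 0"
  shows "\<not> ((\<forall>\<theta>0 i. weak_conv_m (\<lambda>k. distr M borel (\<lambda>\<omega>. traj f g \<theta>0 (\<eta> \<omega>) k $ i))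
                                    (return borel (Ave \<theta>0)))
            \<and> diff_private M \<eta> f g \<epsilon> \<delta>)"
proof (intro notI, elim conjE)
  assume consensus: "\<forall>\<theta>0 i. weak_conv_m (\<lambda>k. distr M borel (\<lambda>\<omega>. traj f g \<theta>0 (\<eta> \<omega>) k $ i))
                                    (return borel (Ave \<theta>0))"
    and dp: "diff_private M \<eta> f g \<epsilon> \<delta>"
  interpret prob_space M by (rule P)
  have "\<not> card (UNIV :: 'n set) \<le> Suc 0"
    using n2 by simp
  then obtain i0 j :: 'n where "i0 \<noteq> j"
    unfolding card_le_Suc0_iff_eq[OF finite] by blast
  define \<theta>2 :: "real^'n" where "\<theta>2 = (\<chi> i. if i = i0 then \<delta> else 0)"
  have adj: "delta_adjacent \<delta> 0 \<theta>2"
    unfolding delta_adjacent_def \<theta>2_def using \<delta>pos by (intro exI[of _ i0]) auto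
  have agree: "\<theta>2 $ j = 0 $ j"
    using \<open>i0 \<noteq> j\<close> by (simp add: \<theta>2_def)
  have rv: "random_variable borel (\<lambda>\<omega>. traj f g \<theta>0 (\<eta> \<omega>) k $ j)" for \<theta>0 k
    by (rule borel_measurable_traj_component[OF f_cont g_cont eta_rv])
  have "Ave \<theta>2 = \<delta> / real CARD('n)"
    unfolding Ave_def \<theta>2_def vec_lambda_beta sum.delta by simp
  then have "Ave (0 :: real^'n) < Ave \<theta>2"
    using \<delta>pos by (simp add: Ave_def)
  then show False
    by (rule weak_conv_m_return_not_dominated[OF consensus[rule_format, of 0 j]
          consensus[rule_format, of \<theta>2 j] real_distribution_distr[OF rv] real_distribution_distr[OF rv]])
      (rule diff_private_component_bound[OF f_cont g_cont f_local eta_rv dp adj agree lessThan_borel])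
qed

end
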